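(* A function $f:\mathbb{N}^d\to\mathbb{N}$ is stably computable by an output-oblivious CRN if and only if it is stably computable by an output-monotonic CRN.
   Context: A chemical reaction network (CRN) is a pair $(\mathcal{S},\mathcal{R})$ of a finite set of species and a finite set of reactions $(\vec{R},\vec{P})\in\mathbb{N}^{\mathcal{S}}\times\mathbb{N}^{\mathcal{S}}$. A configuration is $\vec{C}\in\mathbb{N}^{\mathcal{S}}$; a reaction is applicable if $\vec{R}\le\vec{C}$ and yields $\vec{C}-\vec{R}+\vec{P}$; reachability is via finite sequences of applicable reactions. To compute $f:\mathbb{N}^d\to\mathbb{N}$ a CRN has input species $X_1,\ldots,X_d$, output species $Y$, leader species $L$; the initial configuration $\vec{I}_{\vec{x}}$ has $\vec{x}(i)$ copies of $X_i$, one $L$, nothing else. $\vec{C}$ is stable if all configurations reachable from it have the same count of $Y$. The CRN stably computes $f$ if for every $\vec{x}$ and every $\vec{C}$ reachable from $\vec{I}_{\vec{x}}$ some stable $\vec{O}$ reachable from $\vec{C}$ has $\vec{O}(Y)=f(\vec{x})$. A CRN is output-oblivious if $\vec{R}(Y)=0$ for every reaction $(\vec{R},\vec{P})$; it is output-monotonic if no reaction decreases the count of $Y$, i.e. $\vec{P}(Y)\ge\vec{R}(Y)$ for every reaction. *)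

theory Defs
  imports Main
begin

text \<open>Species are represented by natural numbers; a configuration is a function
  from species to counts (vectors in N^S, zero outside the species set).\<close>

type_synonym config = "nat \<Rightarrow> nat"
type_synonym reaction = "config \<times> config"

record crn =
  species :: "nat set"
  reactions :: "reaction set"
  inputs :: "nat \<Rightarrow> nat"
  out_sp :: nat
  leader_sp :: nat

definition wf_crn :: "nat \<Rightarrow> crn \<Rightarrow> bool" where
  "wf_crn d C \<longleftrightarrow>
     finite (species C) \<and> finite (reactions C) \<and>
     (\<forall>(R, P) \<in> reactions C. \<forall>s. s \<notin> species C \<longrightarrow> R s = 0 \<and> P s = 0) \<and>
     inputs C ` {..<d} \<subseteq> species C \<and> inj_on (inputs C) {..<d} \<and>
     out_sp C \<in> species C \<and> leader_sp C \<in> species C \<and>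
     leader_sp C \<notin> inputs C ` {..<d} \<and> out_sp C \<notin> inputs C ` {..<d} \<and>
     out_sp C \<noteq> leader_sp C"

definition step :: "crn \<Rightarrow> config \<Rightarrow> config \<Rightarrow> bool" where
  "step C c c' \<longleftrightarrow> (\<exists>(R, P) \<in> reactions C. R \<le> c \<and> c' = (\<lambda>s. c s - R s + P s))"

definition reachable :: "crn \<Rightarrow> config \<Rightarrow> config \<Rightarrow> bool" where
  "reachable C = (step C)\<^sup>*\<^sup>*"

definition stable :: "crn \<Rightarrow> config \<Rightarrow> bool" where
  "stable C c \<longleftrightarrow> (\<forall>c'. reachable C c c' \<longrightarrow> c' (out_sp C) = c (out_sp C))"

definition init_config :: "nat \<Rightarrow> crn \<Rightarrow> nat list \<Rightarrow> config" where
  "init_config d C x = (\<lambda>s. (\<Sum>i<d. if inputs C i = s then x ! i else 0)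
                            + (if s = leader_sp C then 1 else 0))"

text \<open>Inputs in N^d are lists of length d.\<close>
definition stably_computes :: "nat \<Rightarrow> crn \<Rightarrow> (nat list \<Rightarrow> nat) \<Rightarrow> bool" where
  "stably_computes d C f \<longleftrightarrow> wf_crn d C \<and>
     (\<forall>x. length x = d \<longrightarrow>
        (\<forall>c. reachable C (init_config d C x) c \<longrightarrow>
           (\<exists>o'. reachable C c o' \<and> stable C o' \<and> o' (out_sp C) = f x)))"

definition output_oblivious :: "crn \<Rightarrow> bool" where
  "output_oblivious C \<longleftrightarrow> (\<forall>(R, P) \<in> reactions C. R (out_sp C) = 0)"

definition output_monotonic :: "crn \<Rightarrow> bool" where
  "output_monotonic C \<longleftrightarrow> (\<forall>(R, P) \<in> reactions C. P (out_sp C) \<ge> R (out_sp C))"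

end

theory Submission
  imports Defs
begin

text \<open>An output-oblivious CRN is trivially output-monotonic. Conversely, given an
  output-monotonic CRN with output Y, add a fresh species Y' and let every reaction
  additionally produce as many copies of Y' as its net production of Y, which is
  nonnegative by monotonicity. Y' never occurs as a reactant, and starting with no Y
  and no Y', the count of Y' equals that of Y forever. Forgetting Y' turns runs of the
  new CRN into runs of the old one and vice versa, so declaring Y' the output
  preserves stable computation.\<close>

lemma output_oblivious_imp_output_monotonic:
  "output_oblivious C \<Longrightarrow> output_monotonic C"
  unfolding output_oblivious_def output_monotonic_def by auto

definition oblivious_copy :: "crn \<Rightarrow> nat \<Rightarrow> crn" where
  "oblivious_copy C n = C\<lparr>species := insert n (species C),
     reactions := (\<lambda>(R, P). (R, P(n := P (out_sp C) - R (out_sp C)))) ` reactions C,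
     out_sp := n\<rparr>"

lemma out_sp_oblivious_copy [simp]: "out_sp (oblivious_copy C n) = n"
  by (simp add: oblivious_copy_def)

lemma wf_crn_reaction_outside_species:
  "wf_crn d C \<Longrightarrow> s \<notin> species C \<Longrightarrow> (R, P) \<in> reactions C \<Longrightarrow> R s = 0 \<and> P s = 0"
  unfolding wf_crn_def by fast

lemma output_oblivious_oblivious_copy:
  assumes "wf_crn d C" and "n \<notin> species C"
  shows "output_oblivious (oblivious_copy C n)"
  using wf_crn_reaction_outside_species[OF assms]
  unfolding output_oblivious_def oblivious_copy_def by auto

lemma wf_crn_oblivious_copy:
  "wf_crn d C \<Longrightarrow> n \<notin> species C \<Longrightarrow> wf_crn d (oblivious_copy C n)"
  unfolding wf_crn_def oblivious_copy_def by (auto simp: split_beta)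

lemma init_config_oblivious_copy [simp]:
  "init_config d (oblivious_copy C n) = init_config d C"
  unfolding init_config_def oblivious_copy_def by simp

lemma init_config_eq_zero:
  assumes "wf_crn d C" and "s \<noteq> leader_sp C" and "s \<notin> inputs C ` {..<d}"
  shows "init_config d C x s = 0"
  using assms unfolding init_config_def by (auto intro!: sum.neutral)

context
  fixes C :: crn and d n :: nat
  assumes wf: "wf_crn d C" and fresh: "n \<notin> species C" and mono: "output_monotonic C"
begin

private lemma out_sp_neq_fresh: "out_sp C \<noteq> n"
  using wf fresh unfolding wf_crn_def by auto

lemma step_oblivious_copy_imp_step:
  assumes "step (oblivious_copy C n) c c'"
  shows "step C (c(n := 0)) (c'(n := 0)) \<and> (c n = c (out_sp C) \<longrightarrow> c' n = c' (out_sp C))"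
proof -
  obtain R P where RP: "(R, P) \<in> reactions C" and le: "R \<le> c"
    and c': "c' = (\<lambda>s. c s - R s + (P(n := P (out_sp C) - R (out_sp C))) s)"
    using assms unfolding step_def oblivious_copy_def by auto
  have absent: "R n = 0" "P n = 0"
    using wf_crn_reaction_outside_species[OF wf fresh RP] by auto
  have "R (out_sp C) \<le> P (out_sp C)"
    using mono RP unfolding output_monotonic_def by auto
  then have "c n = c (out_sp C) \<longrightarrow> c' n = c' (out_sp C)"
    using absent out_sp_neq_fresh le by (auto simp: c' le_fun_def)
  moreover have "R \<le> c(n := 0)"
    using le absent by (auto simp: le_fun_def)
  moreover have "c'(n := 0) = (\<lambda>s. (c(n := 0)) s - R s + P s)"
    using absent by (auto simp: c')
  ultimately show ?thesis
    using RP unfolding step_def by blast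
qed

lemma step_imp_step_oblivious_copy:
  assumes "step C c c'" and "c n = 0"
  shows "c' n = 0 \<and> step (oblivious_copy C n) (c(n := c (out_sp C))) (c'(n := c' (out_sp C)))"
proof -
  obtain R P where RP: "(R, P) \<in> reactions C" and le: "R \<le> c"
    and c': "c' = (\<lambda>s. c s - R s + P s)"
    using assms(1) unfolding step_def by auto
  have absent: "R n = 0" "P n = 0"
    using wf_crn_reaction_outside_species[OF wf fresh RP] by auto
  have "R (out_sp C) \<le> P (out_sp C)"
    using mono RP unfolding output_monotonic_def by auto
  moreover have "R (out_sp C) \<le> c (out_sp C)"
    using le by (auto simp: le_fun_def)
  ultimately have "c'(n := c' (out_sp C)) = (\<lambda>s. (c(n := c (out_sp C))) s - R s
        + (P(n := P (out_sp C) - R (out_sp C))) s)"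
    using absent out_sp_neq_fresh by (auto simp: c')
  moreover have "(R, P(n := P (out_sp C) - R (out_sp C))) \<in> reactions (oblivious_copy C n)"
    using RP unfolding oblivious_copy_def by force
  moreover have "R \<le> c(n := c (out_sp C))"
    using le absent by (auto simp: le_fun_def)
  ultimately have "step (oblivious_copy C n) (c(n := c (out_sp C))) (c'(n := c' (out_sp C)))"
    unfolding step_def by blast
  moreover have "c' n = 0"
    using absent assms(2) by (simp add: c')
  ultimately show ?thesis by blast
qed

lemma reachable_oblivious_copy_imp_reachable:
  "reachable (oblivious_copy C n) c c' \<Longrightarrow>
     reachable C (c(n := 0)) (c'(n := 0)) \<and> (c n = c (out_sp C) \<longrightarrow> c' n = c' (out_sp C))"
  unfolding reachable_def
proof (induction rule: rtranclp_induct)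
  case (step c' c'')
  then show ?case
    using step_oblivious_copy_imp_step by (meson rtranclp.rtrancl_into_rtrancl)
qed simp

lemma reachable_imp_reachable_oblivious_copy:
  "reachable C c c' \<Longrightarrow> c n = 0 \<Longrightarrow>
     c' n = 0 \<and> reachable (oblivious_copy C n) (c(n := c (out_sp C))) (c'(n := c' (out_sp C)))"
  unfolding reachable_def
proof (induction rule: rtranclp_induct)
  case (step c' c'')
  then show ?case
    using step_imp_step_oblivious_copy by (meson rtranclp.rtrancl_into_rtrancl)
qed simp

lemma stable_oblivious_copy:
  assumes "stable C c" and "c n = 0"
  shows "stable (oblivious_copy C n) (c(n := c (out_sp C)))"
  unfolding stable_def
proof (intro allI impI)
  fix c' assume "reachable (oblivious_copy C n) (c(n := c (out_sp C))) c'"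
  from reachable_oblivious_copy_imp_reachable[OF this]
  have "reachable C c (c'(n := 0))" and "c' n = c' (out_sp C)"
    using assms(2) out_sp_neq_fresh by (auto simp: fun_upd_idem)
  with assms(1) show "c' (out_sp (oblivious_copy C n)) =
      (c(n := c (out_sp C))) (out_sp (oblivious_copy C n))"
    using out_sp_neq_fresh unfolding stable_def by force
qed

lemma stably_computes_oblivious_copy:
  assumes sc: "stably_computes d C f"
  shows "stably_computes d (oblivious_copy C n) f"
  unfolding stably_computes_def
proof (intro conjI wf_crn_oblivious_copy[OF wf fresh] allI impI)
  fix x c
  assume len: "length x = d"
    and "reachable (oblivious_copy C n) (init_config d (oblivious_copy C n) x) c"
  moreover have "init_config d C x n = 0" "init_config d C x (out_sp C) = 0"
    using wf fresh out_sp_neq_fresh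
    by (auto intro!: init_config_eq_zero simp: wf_crn_def)
  ultimately have reach: "reachable C (init_config d C x) (c(n := 0))" and copy: "c n = c (out_sp C)"
    using reachable_oblivious_copy_imp_reachable[of "init_config d C x" c]
    by (auto simp: fun_upd_idem)
  obtain o' where "reachable C (c(n := 0)) o'" and "stable C o'" and "o' (out_sp C) = f x"
    using sc len reach unfolding stably_computes_def by blast
  moreover have "c(n := 0, n := c (out_sp C)) = c"
    using copy by auto
  ultimately show "\<exists>o'. reachable (oblivious_copy C n) c o' \<and>
      stable (oblivious_copy C n) o' \<and> o' (out_sp (oblivious_copy C n)) = f x"
    using reachable_imp_reachable_oblivious_copy stable_oblivious_copy out_sp_neq_fresh
    by (metis fun_upd_same fun_upd_other out_sp_oblivious_copy)
qed

end

lemma ex_fresh_species: "wf_crn d C \<Longrightarrow> \<exists>n. n \<notin> species C"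
  unfolding wf_crn_def using ex_new_if_finite infinite_UNIV_nat by blast

theorem mainTheorem11:
  fixes d :: nat and f :: "nat list \<Rightarrow> nat"
  shows "(\<exists>C. output_oblivious C \<and> stably_computes d C f) \<longleftrightarrow>
         (\<exists>C. output_monotonic C \<and> stably_computes d C f)"
proof
  assume "\<exists>C. output_oblivious C \<and> stably_computes d C f"
  then show "\<exists>C. output_monotonic C \<and> stably_computes d C f"
    using output_oblivious_imp_output_monotonic by blast
next
  assume "\<exists>C. output_monotonic C \<and> stably_computes d C f"
  then obtain C where mono: "output_monotonic C" and sc: "stably_computes d C f"
    by blast
  have wf: "wf_crn d C"
    using sc unfolding stably_computes_def by blast
  obtain n where fresh: "n \<notin> species C"
    using ex_fresh_species[OF wf] by blast
  have "output_oblivious (oblivious_copy C n)"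
    using output_oblivious_oblivious_copy[OF wf fresh] .
  moreover have "stably_computes d (oblivious_copy C n) f"
    using stably_computes_oblivious_copy[OF wf fresh mono sc] .
  ultimately show "\<exists>C. output_oblivious C \<and> stably_computes d C f"
    by blast
qed

end
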